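(* Let $\mathbb{C}$ be a regular category, $I$ a set, $\mathcal{J}=(I_j)_{j\in J}$ a family of subsets of $I$, and $(A_i)_{i\in I}$ a family of objects of $\mathbb{C}$ such that all products below exist. The following are equivalent: (i) $\prod_{i\in I}A_i$ has $\mathcal{J}$-fold subobject decompositions. (ii) For any monomorphism $s:S\to\prod_{i\in I}A_i$, the square with top arrow $(e_{I_j})_{j\in J}:S\to\prod_{j\in J}S_{I_j}$, left arrow $s$, right arrow $\prod_{j\in J}s_{I_j}:\prod_{j\in J}S_{I_j}\to\prod_{j\in J}\prod_{k\in I_j}A_k$ and bottom arrow $(\pi_{I_j})_{j\in J}:\prod_{i\in I}A_i\to\prod_{j\in J}\prod_{k\in I_j}A_k$ is a pullback, where $S\xrightarrow{e_{I_j}}S_{I_j}\xrightarrow{s_{I_j}}\prod_{k\in I_j}A_k$ is a regular epi–mono factorization of $\pi_{I_j}s$.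
   Context: A category is regular if it has finite limits and coequalizers of kernel pairs and regular epimorphisms are pullback-stable; every morphism factors as a regular epimorphism followed by a monomorphism, and the image of a subobject $S$ (represented by $s$) under a morphism $f$ is the subobject represented by the mono part of such a factorization of $fs$. For $K\subseteq I$, $\pi_K:\prod_{i\in I}A_i\to\prod_{k\in K}A_k$ is the canonical projection and the $K$-image $S_K$ of a subobject $S$ of $\prod_{i\in I}A_i$ is its image under $\pi_K$. The product $\prod_{i\in I}A_i$ has $\mathcal{J}$-fold subobject decompositions if for any two subobjects $S,T$ of $\prod_{i\in I}A_i$ with $S_{I_j}=T_{I_j}$ for all $j\in J$, we have $S=T$. *)

theory Defs
  imports Main
begin

text \<open>A category given by its set of objects, set of arrows, domain, codomain,
identities and composition; Comp C g f is the composite "g after f".\<close>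

record ('o, 'm) cat =
  Ob   :: "'o set"
  Ar   :: "'m set"
  Dom  :: "'m \<Rightarrow> 'o"
  Cod  :: "'m \<Rightarrow> 'o"
  Id   :: "'o \<Rightarrow> 'm"
  Comp :: "'m \<Rightarrow> 'm \<Rightarrow> 'm"

definition hom :: "('o, 'm) cat \<Rightarrow> 'o \<Rightarrow> 'o \<Rightarrow> 'm set" where
  "hom C a b = {f \<in> Ar C. Dom C f = a \<and> Cod C f = b}"

definition category :: "('o, 'm) cat \<Rightarrow> bool" where
  "category C \<longleftrightarrow>
     (\<forall>f \<in> Ar C. Dom C f \<in> Ob C \<and> Cod C f \<in> Ob C) \<and>
     (\<forall>a \<in> Ob C. Id C a \<in> hom C a a) \<and>
     (\<forall>a b c f g. f \<in> hom C a b \<and> g \<in> hom C b c \<longrightarrow> Comp C g f \<in> hom C a c) \<and>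
     (\<forall>a b f. f \<in> hom C a b \<longrightarrow> Comp C f (Id C a) = f \<and> Comp C (Id C b) f = f) \<and>
     (\<forall>a b c d f g h. f \<in> hom C a b \<and> g \<in> hom C b c \<and> h \<in> hom C c d \<longrightarrow>
        Comp C h (Comp C g f) = Comp C (Comp C h g) f)"

definition mono :: "('o, 'm) cat \<Rightarrow> 'm \<Rightarrow> bool" where
  "mono C m \<longleftrightarrow> m \<in> Ar C \<and>
     (\<forall>f g. f \<in> Ar C \<and> g \<in> Ar C \<and> Dom C f = Dom C g \<and> Cod C f = Dom C m \<and>
            Cod C g = Dom C m \<and> Comp C m f = Comp C m g \<longrightarrow> f = g)"

text \<open>The commutative square with top arrow a : X \<rightarrow> Y, left arrow s : X \<rightarrow> Z,
right arrow b : Y \<rightarrow> W and bottom arrow c : Z \<rightarrow> W is a pullback.\<close>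

definition is_pullback :: "('o, 'm) cat \<Rightarrow> 'm \<Rightarrow> 'm \<Rightarrow> 'm \<Rightarrow> 'm \<Rightarrow> bool" where
  "is_pullback C a s b c \<longleftrightarrow>
     a \<in> Ar C \<and> s \<in> Ar C \<and> b \<in> Ar C \<and> c \<in> Ar C \<and>
     Dom C a = Dom C s \<and> Cod C a = Dom C b \<and> Cod C s = Dom C c \<and> Cod C b = Cod C c \<and>
     Comp C b a = Comp C c s \<and>
     (\<forall>f g. f \<in> Ar C \<and> g \<in> Ar C \<and> Dom C f = Dom C g \<and> Cod C f = Dom C b \<and>
            Cod C g = Dom C c \<and> Comp C b f = Comp C c g \<longrightarrow>
        (\<exists>!u. u \<in> hom C (Dom C g) (Dom C a) \<and> Comp C a u = f \<and> Comp C s u = g))"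

definition terminal :: "('o, 'm) cat \<Rightarrow> 'o \<Rightarrow> bool" where
  "terminal C t \<longleftrightarrow> t \<in> Ob C \<and> (\<forall>x \<in> Ob C. \<exists>!u. u \<in> hom C x t)"

definition has_pullbacks :: "('o, 'm) cat \<Rightarrow> bool" where
  "has_pullbacks C \<longleftrightarrow>
     (\<forall>b c. b \<in> Ar C \<and> c \<in> Ar C \<and> Cod C b = Cod C c \<longrightarrow> (\<exists>a s. is_pullback C a s b c))"

text \<open>Finite limits: a terminal object and all pullbacks (the standard equivalent).\<close>

definition has_finite_limits :: "('o, 'm) cat \<Rightarrow> bool" where
  "has_finite_limits C \<longleftrightarrow> (\<exists>t. terminal C t) \<and> has_pullbacks C"

definition is_coequalizer :: "('o, 'm) cat \<Rightarrow> 'm \<Rightarrow> 'm \<Rightarrow> 'm \<Rightarrow> bool" where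
  "is_coequalizer C f g q \<longleftrightarrow>
     f \<in> Ar C \<and> g \<in> Ar C \<and> q \<in> Ar C \<and> Dom C f = Dom C g \<and> Cod C f = Cod C g \<and>
     Dom C q = Cod C f \<and> Comp C q f = Comp C q g \<and>
     (\<forall>h. h \<in> Ar C \<and> Dom C h = Cod C f \<and> Comp C h f = Comp C h g \<longrightarrow>
        (\<exists>!u. u \<in> hom C (Cod C q) (Cod C h) \<and> Comp C u q = h))"

definition regular_epi :: "('o, 'm) cat \<Rightarrow> 'm \<Rightarrow> bool" where
  "regular_epi C e \<longleftrightarrow> (\<exists>f g. is_coequalizer C f g e)"

text \<open>(p1, p2) is a kernel pair of f iff the square p1, p2, f, f is a pullback.\<close>

definition regular_category :: "('o, 'm) cat \<Rightarrow> bool" where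
  "regular_category C \<longleftrightarrow>
     category C \<and> has_finite_limits C \<and>
     (\<forall>f p1 p2. is_pullback C p1 p2 f f \<longrightarrow> (\<exists>q. is_coequalizer C p1 p2 q)) \<and>
     (\<forall>e f a s. regular_epi C e \<and> is_pullback C a s e f \<longrightarrow> regular_epi C s)"

definition is_product :: "('o, 'm) cat \<Rightarrow> 'i set \<Rightarrow> ('i \<Rightarrow> 'o) \<Rightarrow> 'o \<Rightarrow> ('i \<Rightarrow> 'm) \<Rightarrow> bool" where
  "is_product C I A P p \<longleftrightarrow>
     P \<in> Ob C \<and> (\<forall>i \<in> I. p i \<in> hom C P (A i)) \<and>
     (\<forall>X f. X \<in> Ob C \<and> (\<forall>i \<in> I. f i \<in> hom C X (A i)) \<longrightarrow>
        (\<exists>!u. u \<in> hom C X P \<and> (\<forall>i \<in> I. Comp C (p i) u = f i)))"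

definition same_subobject :: "('o, 'm) cat \<Rightarrow> 'm \<Rightarrow> 'm \<Rightarrow> bool" where
  "same_subobject C m m' \<longleftrightarrow>
     mono C m \<and> mono C m' \<and> Cod C m = Cod C m' \<and>
     (\<exists>u v. u \<in> hom C (Dom C m) (Dom C m') \<and> Comp C m' u = m \<and>
            v \<in> hom C (Dom C m') (Dom C m) \<and> Comp C m v = m')"

definition is_image_factorization :: "('o, 'm) cat \<Rightarrow> 'm \<Rightarrow> 'm \<Rightarrow> 'm \<Rightarrow> bool" where
  "is_image_factorization C f e m \<longleftrightarrow>
     f \<in> Ar C \<and> regular_epi C e \<and> mono C m \<and> Dom C e = Dom C f \<and> Cod C e = Dom C m \<and>
     Cod C m = Cod C f \<and> Comp C m e = f"

text \<open>J-fold subobject decompositions of the product P (projections onto the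
partial products Q j being piI j, i.e. \<pi>_{I_j}): two subobjects s, s' of P with
equal I_j-images for all j are equal.\<close>

definition has_fold_subobject_decompositions ::
  "('o, 'm) cat \<Rightarrow> 'j set \<Rightarrow> 'o \<Rightarrow> ('j \<Rightarrow> 'm) \<Rightarrow> bool" where
  "has_fold_subobject_decompositions C J P piI \<longleftrightarrow>
     (\<forall>s s'. mono C s \<and> Cod C s = P \<and> mono C s' \<and> Cod C s' = P \<and>
        (\<forall>j \<in> J. \<forall>e m e' m'.
            is_image_factorization C (Comp C (piI j) s) e m \<and>
            is_image_factorization C (Comp C (piI j) s') e' m' \<longrightarrow> same_subobject C m m')
        \<longrightarrow> same_subobject C s s')"

end

theory Submission
  imports Defs
begin

text \<open>
  (i) \<Rightarrow> (ii): the arrow \<open>b = \<Prod>\<^sub>j s\<^sub>I\<^sub>j\<close> is mono, being a product of monos, so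
  its pullback \<open>s'\<close> along \<open>c = (\<pi>\<^sub>I\<^sub>j)\<^sub>j\<close> is a subobject of \<open>\<Prod>\<^sub>i A\<^sub>i\<close> through which \<open>s\<close>
  factors. Every \<open>I\<^sub>j\<close>-image of \<open>s'\<close> contains that of \<open>s\<close> and, because of the pullback
  square, is contained in \<open>S\<^sub>I\<^sub>j\<close>; so \<open>s\<close> and \<open>s'\<close> have the same images, hence are equal,
  and the square of \<open>s\<close> is a pullback.

  (ii) \<Rightarrow> (i): if the \<open>I\<^sub>j\<close>-images of \<open>s\<close> lie below those of \<open>s'\<close>, the arrows
  \<open>S \<rightarrow> S\<^sub>I\<^sub>j \<rightarrow> S'\<^sub>I\<^sub>j\<close> assemble to \<open>S \<rightarrow> \<Prod>\<^sub>j S'\<^sub>I\<^sub>j\<close>, which together with \<open>s\<close> is a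
  cone over the square of \<open>s'\<close>; as that square is a pullback, \<open>s\<close> factors through \<open>s'\<close>.

  Images exist because in a regular category every \<open>f\<close> factors as the coequalizer of its
  kernel pair followed by a mono.
\<close>

lemma mono_arr: "mono C m \<Longrightarrow> m \<in> Ar C"
  by (simp add: mono_def)

lemma mono_cancel:
  assumes "mono C m" "Comp C m f = Comp C m g" "f \<in> Ar C" "g \<in> Ar C" "Dom C f = Dom C g"
    "Cod C f = Dom C m" "Cod C g = Dom C m"
  shows "f = g"
  using assms unfolding mono_def by blast

lemma product_proj:
  assumes "is_product C I A P p" "i \<in> I"
  shows "p i \<in> Ar C" "Dom C (p i) = P" "Cod C (p i) = A i"
  using assms unfolding is_product_def hom_def by auto

lemma product_ob: "is_product C I A P p \<Longrightarrow> P \<in> Ob C"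
  by (simp add: is_product_def)

lemma product_tuple:
  assumes "is_product C I A P p" "X \<in> Ob C" "\<forall>i \<in> I. f i \<in> hom C X (A i)"
  obtains u where "u \<in> Ar C" "Dom C u = X" "Cod C u = P" "\<forall>i \<in> I. Comp C (p i) u = f i"
  using assms unfolding is_product_def hom_def by blast

lemma pullbackD:
  assumes "is_pullback C a s b c"
  shows "a \<in> Ar C" "s \<in> Ar C" "b \<in> Ar C" "c \<in> Ar C" "Dom C a = Dom C s" "Cod C a = Dom C b"
    "Cod C s = Dom C c" "Cod C b = Cod C c" "Comp C b a = Comp C c s"
  using assms unfolding is_pullback_def by auto

lemma pullback_factor:
  assumes "is_pullback C a s b c" "f \<in> Ar C" "g \<in> Ar C" "Dom C f = Dom C g"
    "Cod C f = Dom C b" "Cod C g = Dom C c" "Comp C b f = Comp C c g"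
  obtains u where "u \<in> Ar C" "Dom C u = Dom C g" "Cod C u = Dom C a"
    "Comp C a u = f" "Comp C s u = g"
  using assms unfolding is_pullback_def hom_def by blast

lemma coequalizerD:
  assumes "is_coequalizer C f g q"
  shows "f \<in> Ar C" "g \<in> Ar C" "q \<in> Ar C" "Dom C g = Dom C f" "Cod C f = Dom C q"
    "Cod C g = Dom C q" "Comp C q f = Comp C q g"
  using assms unfolding is_coequalizer_def by auto

lemma coequalizer_factor:
  assumes co: "is_coequalizer C f g q" and h: "h \<in> Ar C" "Dom C h = Dom C q"
    "Comp C h f = Comp C h g"
  obtains u where "u \<in> Ar C" "Dom C u = Cod C q" "Cod C u = Cod C h" "Comp C u q = h"
proof -
  have univ: "\<forall>h. h \<in> Ar C \<and> Dom C h = Cod C f \<and> Comp C h f = Comp C h g \<longrightarrow>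
      (\<exists>!u. u \<in> hom C (Cod C q) (Cod C h) \<and> Comp C u q = h)"
    using co unfolding is_coequalizer_def by blast
  have "Dom C h = Cod C f" using co h(2) unfolding is_coequalizer_def by simp
  then have "\<exists>u. u \<in> hom C (Cod C q) (Cod C h) \<and> Comp C u q = h"
    using univ h(1,3) by blast
  then show ?thesis using that unfolding hom_def by blast
qed

lemma regular_epi_arr: "regular_epi C e \<Longrightarrow> e \<in> Ar C"
  unfolding regular_epi_def is_coequalizer_def by blast

lemma image_factorizationD:
  assumes "is_image_factorization C f e m"
  shows "regular_epi C e" "mono C m" "e \<in> Ar C" "m \<in> Ar C" "Dom C e = Dom C f"
    "Cod C e = Dom C m" "Cod C m = Cod C f" "Comp C m e = f"
  using assms regular_epi_arr mono_arr unfolding is_image_factorization_def by auto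

definition subobj_le :: "('o, 'm) cat \<Rightarrow> 'm \<Rightarrow> 'm \<Rightarrow> bool" where
  "subobj_le C m n \<longleftrightarrow> (\<exists>d \<in> hom C (Dom C m) (Dom C n). Comp C n d = m)"

lemma same_subobject_iff:
  "same_subobject C m n \<longleftrightarrow>
     mono C m \<and> mono C n \<and> Cod C m = Cod C n \<and> subobj_le C m n \<and> subobj_le C n m"
  unfolding same_subobject_def subobj_le_def by auto

locale in_category =
  fixes C :: "('o, 'm) cat"
  assumes category: "category C"
begin

abbreviation comp (infixr "\<cdot>" 55) where "g \<cdot> f \<equiv> Comp C g f"

lemma
  assumes "f \<in> Ar C" "g \<in> Ar C" "Dom C g = Cod C f"
  shows comp_arr: "g \<cdot> f \<in> Ar C" and dom_comp: "Dom C (g \<cdot> f) = Dom C f"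
    and cod_comp: "Cod C (g \<cdot> f) = Cod C g"
  using assms category unfolding category_def hom_def by auto

lemmas comp_typing = comp_arr dom_comp cod_comp

lemma comp_assoc:
  assumes "f \<in> Ar C" "g \<in> Ar C" "h \<in> Ar C" "Dom C g = Cod C f" "Dom C h = Cod C g"
  shows "h \<cdot> (g \<cdot> f) = (h \<cdot> g) \<cdot> f"
proof -
  have "f \<in> hom C (Dom C f) (Cod C f)" "g \<in> hom C (Cod C f) (Cod C g)"
    "h \<in> hom C (Cod C g) (Cod C h)"
    using assms by (auto simp: hom_def)
  then show ?thesis using category unfolding category_def by blast
qed

lemma dom_ob: "f \<in> Ar C \<Longrightarrow> Dom C f \<in> Ob C"
  using category unfolding category_def by blast

lemma product_arr_eqI:
  assumes "is_product C I A P p" "u \<in> Ar C" "v \<in> Ar C" "Dom C u = Dom C v"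
    "Cod C u = P" "Cod C v = P" "\<forall>i \<in> I. p i \<cdot> u = p i \<cdot> v"
  shows "u = v"
proof -
  have "\<exists>!w. w \<in> hom C (Dom C u) P \<and> (\<forall>i \<in> I. p i \<cdot> w = p i \<cdot> u)"
    using assms(1,2,5) product_proj[OF assms(1)] dom_ob
    unfolding is_product_def by (simp add: hom_def comp_typing)
  then show ?thesis using assms by (auto simp: hom_def)
qed

lemma regular_epi_cancel:
  assumes "regular_epi C e" "x \<cdot> e = y \<cdot> e" "x \<in> Ar C" "y \<in> Ar C" "Dom C x = Cod C e"
    "Dom C y = Cod C e" "Cod C x = Cod C y"
  shows "x = y"
proof -
  obtain f g where co: "is_coequalizer C f g e"
    using assms(1) unfolding regular_epi_def by blast
  note E = coequalizerD[OF co]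
  have xe: "x \<cdot> e \<in> Ar C" "Dom C (x \<cdot> e) = Dom C e" "Cod C (x \<cdot> e) = Cod C x"
    using E assms by (simp_all add: comp_typing)
  have "(x \<cdot> e) \<cdot> f = x \<cdot> (e \<cdot> f)"
    using E(1-6) assms(3,5) by (simp add: comp_assoc)
  also have "\<dots> = x \<cdot> (e \<cdot> g)" using E(7) by simp
  also have "\<dots> = (x \<cdot> e) \<cdot> g"
    using E(1-6) assms(3,5) by (simp add: comp_assoc)
  finally have "(x \<cdot> e) \<cdot> f = (x \<cdot> e) \<cdot> g" .
  then have "\<exists>!u. u \<in> hom C (Cod C e) (Cod C x) \<and> u \<cdot> e = x \<cdot> e"
    using co xe E(5) unfolding is_coequalizer_def by (metis (no_types, lifting))
  then show ?thesis using assms by (auto simp: hom_def)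
qed

lemma pullback_arr_eqI:
  assumes pb: "is_pullback C a s b c" and eq: "a \<cdot> u = a \<cdot> v" "s \<cdot> u = s \<cdot> v"
    and u: "u \<in> Ar C" "Dom C u = Dom C v" "Cod C u = Dom C a"
    and v: "v \<in> Ar C" "Cod C v = Dom C a"
  shows "u = v"
proof -
  note P = pullbackD[OF pb]
  have univ: "\<forall>f g. f \<in> Ar C \<and> g \<in> Ar C \<and> Dom C f = Dom C g \<and> Cod C f = Dom C b \<and>
      Cod C g = Dom C c \<and> b \<cdot> f = c \<cdot> g \<longrightarrow>
      (\<exists>!w. w \<in> hom C (Dom C g) (Dom C a) \<and> a \<cdot> w = f \<and> s \<cdot> w = g)"
    using pb unfolding is_pullback_def by blast
  have ty: "a \<cdot> u \<in> Ar C" "s \<cdot> u \<in> Ar C" "Dom C (a \<cdot> u) = Dom C u" "Dom C (s \<cdot> u) = Dom C u"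
    "Cod C (a \<cdot> u) = Dom C b" "Cod C (s \<cdot> u) = Dom C c"
    using P u by (simp_all add: comp_typing)
  have "b \<cdot> (a \<cdot> u) = (b \<cdot> a) \<cdot> u" using P u by (simp add: comp_assoc)
  also have "\<dots> = c \<cdot> (s \<cdot> u)" using P(1-8) u by (simp add: P(9) comp_assoc)
  finally have "\<exists>!w. w \<in> hom C (Dom C (s \<cdot> u)) (Dom C a) \<and> a \<cdot> w = a \<cdot> u \<and> s \<cdot> w = s \<cdot> u"
    by (intro univ[rule_format]) (use ty in simp)
  then have ex1: "\<exists>!w. w \<in> hom C (Dom C u) (Dom C a) \<and> a \<cdot> w = a \<cdot> u \<and> s \<cdot> w = s \<cdot> u"
    using ty(4) by simp
  have "u \<in> hom C (Dom C u) (Dom C a)" "v \<in> hom C (Dom C u) (Dom C a)"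
    using u v by (simp_all add: hom_def)
  then show ?thesis
    using the1_equality[OF ex1, of u] the1_equality[OF ex1, of v] eq by simp
qed

lemma pullback_mono:
  assumes pb: "is_pullback C a s b c" and b: "mono C b"
  shows "mono C s"
  unfolding mono_def
proof (intro conjI allI impI)
  note P = pullbackD[OF pb]
  show "s \<in> Ar C" by (rule P(2))
  fix f g
  assume "f \<in> Ar C \<and> g \<in> Ar C \<and> Dom C f = Dom C g \<and> Cod C f = Dom C s \<and>
    Cod C g = Dom C s \<and> s \<cdot> f = s \<cdot> g"
  then have fg: "f \<in> Ar C" "g \<in> Ar C" "Dom C f = Dom C g" "Cod C f = Dom C s" "Cod C g = Dom C s"
    and eq: "s \<cdot> f = s \<cdot> g"
    by auto
  have "b \<cdot> (a \<cdot> f) = c \<cdot> (s \<cdot> f)" using P(1-8) fg by (simp add: P(9) comp_assoc)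
  also have "\<dots> = c \<cdot> (s \<cdot> g)" using eq by simp
  also have "\<dots> = b \<cdot> (a \<cdot> g)" using P(1-8) fg by (simp add: P(9) comp_assoc)
  finally have "a \<cdot> f = a \<cdot> g"
    by (rule mono_cancel[OF b]) (use P fg in \<open>simp_all add: comp_typing\<close>)
  then show "f = g"
    by (rule pullback_arr_eqI[OF pb]) (use P fg eq in simp_all)
qed

lemma pullback_of_subobj_le:
  assumes pb: "is_pullback C a' s' b c" and b: "mono C b" and s: "mono C s"
    and a: "a \<in> hom C (Dom C s) (Dom C b)" and cs: "Cod C s = Dom C c"
    and comm: "b \<cdot> a = c \<cdot> s" and le: "subobj_le C s' s"
  shows "is_pullback C a s b c"
  unfolding is_pullback_def
proof (intro conjI allI impI)
  note P = pullbackD[OF pb]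
  have A: "a \<in> Ar C" "Dom C a = Dom C s" "Cod C a = Dom C b" using a by (simp_all add: hom_def)
  have S: "s \<in> Ar C" using mono_arr[OF s] .
  obtain v where v: "v \<in> Ar C" "Dom C v = Dom C s'" "Cod C v = Dom C s" "s \<cdot> v = s'"
    using le unfolding subobj_le_def hom_def by blast
  fix f g
  assume fg: "f \<in> Ar C \<and> g \<in> Ar C \<and> Dom C f = Dom C g \<and> Cod C f = Dom C b \<and>
    Cod C g = Dom C c \<and> b \<cdot> f = c \<cdot> g"
  obtain w where w: "w \<in> Ar C" "Dom C w = Dom C g" "Cod C w = Dom C a'" "a' \<cdot> w = f" "s' \<cdot> w = g"
    using pullback_factor[OF pb] fg by blast
  have vw: "v \<cdot> w \<in> Ar C" "Dom C (v \<cdot> w) = Dom C g" "Cod C (v \<cdot> w) = Dom C s"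
    using v w P by (simp_all add: comp_typing)
  have "s \<cdot> (v \<cdot> w) = (s \<cdot> v) \<cdot> w" using S v(1-3) w(1-3) P(5) by (simp add: comp_assoc)
  then have svw: "s \<cdot> (v \<cdot> w) = g" using v(4) w(5) by simp
  have "b \<cdot> (a \<cdot> (v \<cdot> w)) = c \<cdot> (s \<cdot> (v \<cdot> w))"
    using A S vw P(3,4) cs by (simp add: comm comp_assoc)
  also have "\<dots> = b \<cdot> f" using svw fg by simp
  finally have avw: "a \<cdot> (v \<cdot> w) = f"
    by (rule mono_cancel[OF b]) (use A vw fg in \<open>simp_all add: comp_typing\<close>)
  show "\<exists>!u. u \<in> hom C (Dom C g) (Dom C a) \<and> a \<cdot> u = f \<and> s \<cdot> u = g"
  proof (rule ex1I[of _ "v \<cdot> w"])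
    show "v \<cdot> w \<in> hom C (Dom C g) (Dom C a) \<and> a \<cdot> (v \<cdot> w) = f \<and> s \<cdot> (v \<cdot> w) = g"
      using vw A avw svw by (simp add: hom_def)
  next
    fix u assume "u \<in> hom C (Dom C g) (Dom C a) \<and> a \<cdot> u = f \<and> s \<cdot> u = g"
    then show "u = v \<cdot> w"
      using mono_cancel[OF s, of u "v \<cdot> w"] vw A svw by (simp add: hom_def)
  qed
qed (use a cs comm pullbackD[OF pb] mono_arr[OF s] in \<open>simp_all add: hom_def\<close>)

lemma subobj_le_trans:
  assumes "subobj_le C m n" "subobj_le C n k" "k \<in> Ar C"
  shows "subobj_le C m k"
proof -
  obtain d1 where d1: "d1 \<in> Ar C" "Dom C d1 = Dom C m" "Cod C d1 = Dom C n" "n \<cdot> d1 = m"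
    using assms(1) unfolding subobj_le_def hom_def by blast
  obtain d2 where d2: "d2 \<in> Ar C" "Dom C d2 = Dom C n" "Cod C d2 = Dom C k" "k \<cdot> d2 = n"
    using assms(2) unfolding subobj_le_def hom_def by blast
  have "k \<cdot> (d2 \<cdot> d1) = (k \<cdot> d2) \<cdot> d1" using d1(1-3) d2(1-3) assms(3) by (simp add: comp_assoc)
  then have "k \<cdot> (d2 \<cdot> d1) = m" using d1(4) d2(4) by simp
  moreover have "d2 \<cdot> d1 \<in> hom C (Dom C m) (Dom C k)"
    using d1 d2 by (simp add: hom_def comp_typing)
  ultimately show ?thesis unfolding subobj_le_def by blast
qed

lemma image_le_mono:
  assumes fact: "is_image_factorization C f e m" and n: "mono C n"
    and h: "h \<in> Ar C" "Dom C h = Dom C f" "Cod C h = Dom C n" and f: "n \<cdot> h = f"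
  shows "subobj_le C m n"
proof -
  note F = image_factorizationD[OF fact]
  have N: "n \<in> Ar C" using mono_arr[OF n] .
  have sq: "n \<cdot> h = m \<cdot> e" using f F(8) by simp
  have "Cod C n = Cod C f" using f h N by (auto simp: cod_comp)
  obtain x y where co: "is_coequalizer C x y e" using F(1) unfolding regular_epi_def by blast
  note X = coequalizerD[OF co]
  have "n \<cdot> (h \<cdot> x) = (n \<cdot> h) \<cdot> x" using X F(1-7) h N by (simp add: comp_assoc)
  also have "\<dots> = m \<cdot> (e \<cdot> x)" using X(1-6) F(1-7) by (simp add: sq comp_assoc)
  also have "\<dots> = m \<cdot> (e \<cdot> y)" using X(7) by simp
  also have "\<dots> = (n \<cdot> h) \<cdot> y" using X(1-6) F(1-7) by (simp add: sq comp_assoc)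
  also have "\<dots> = n \<cdot> (h \<cdot> y)" using X F(1-7) h N by (simp add: comp_assoc)
  finally have "h \<cdot> x = h \<cdot> y"
    by (rule mono_cancel[OF n]) (use X F h in \<open>simp_all add: comp_typing\<close>)
  then obtain d where d: "d \<in> Ar C" "Dom C d = Cod C e" "Cod C d = Dom C n" "d \<cdot> e = h"
    using coequalizer_factor[OF co h(1)] X F h by metis
  have "(n \<cdot> d) \<cdot> e = n \<cdot> (d \<cdot> e)" using d(1-3) F(1-7) N by (simp add: comp_assoc)
  then have "(n \<cdot> d) \<cdot> e = m \<cdot> e" using d(4) sq by simp
  then have "n \<cdot> d = m"
    by (rule regular_epi_cancel[OF F(1)])
      (use d F N h \<open>Cod C n = Cod C f\<close> in \<open>simp_all add: comp_typing\<close>)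
  with d(1-3) F(6) show ?thesis unfolding subobj_le_def hom_def by (intro bexI[of _ d]) auto
qed

lemma image_le_image:
  assumes f: "is_image_factorization C f e m" and g: "is_image_factorization C g e' m'"
    and u: "u \<in> Ar C" "Dom C u = Dom C f" "Cod C u = Dom C g" and fg: "g \<cdot> u = f"
  shows "subobj_le C m m'"
proof (rule image_le_mono[OF f image_factorizationD(2)[OF g]])
  note G = image_factorizationD[OF g]
  have "m' \<cdot> (e' \<cdot> u) = (m' \<cdot> e') \<cdot> u" using G(1-7) u by (simp add: comp_assoc)
  then show "m' \<cdot> (e' \<cdot> u) = f" using G(8) fg by simp
qed (use image_factorizationD[OF g] u in \<open>simp_all add: comp_typing\<close>)

lemma product_map_mono:
  assumes T: "is_product C J M T t" and R: "is_product C J Q R r"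
    and m: "\<forall>j \<in> J. mono C (m j) \<and> Dom C (m j) = M j \<and> Cod C (m j) = Q j"
    and b: "b \<in> hom C T R" "\<forall>j \<in> J. r j \<cdot> b = m j \<cdot> t j"
  shows "mono C b"
  unfolding mono_def
proof (intro conjI allI impI)
  have B: "b \<in> Ar C" "Dom C b = T" "Cod C b = R" using b(1) by (simp_all add: hom_def)
  show "b \<in> Ar C" by (rule B(1))
  fix f g
  assume "f \<in> Ar C \<and> g \<in> Ar C \<and> Dom C f = Dom C g \<and> Cod C f = Dom C b \<and>
    Cod C g = Dom C b \<and> b \<cdot> f = b \<cdot> g"
  then have fg: "f \<in> Ar C" "g \<in> Ar C" "Dom C f = Dom C g" "Cod C f = T" "Cod C g = T"
    and eq: "b \<cdot> f = b \<cdot> g"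
    using B by auto
  have "t j \<cdot> f = t j \<cdot> g" if j: "j \<in> J" for j
  proof -
    note TJ = product_proj[OF T j] and RJ = product_proj[OF R j]
    have mj: "mono C (m j)" "Dom C (m j) = M j" "Cod C (m j) = Q j"
      using m j by auto
    note mj = mj mono_arr[OF mj(1)]
    have bj: "r j \<cdot> b = m j \<cdot> t j" using b(2) j by blast
    have "m j \<cdot> (t j \<cdot> f) = r j \<cdot> (b \<cdot> f)" using TJ RJ mj B fg by (simp add: bj comp_assoc)
    also have "\<dots> = r j \<cdot> (b \<cdot> g)" using eq by simp
    also have "\<dots> = m j \<cdot> (t j \<cdot> g)" using TJ RJ mj B fg by (simp add: bj comp_assoc)
    finally show ?thesis
      by (rule mono_cancel[OF mj(1)]) (use TJ mj B fg in \<open>simp_all add: comp_typing\<close>)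
  qed
  then show "f = g"
    by (intro product_arr_eqI[OF T]) (use B fg in simp_all)
qed

end

locale in_regular_category =
  fixes C :: "('o, 'm) cat"
  assumes regular: "regular_category C"

sublocale in_regular_category \<subseteq> in_category
  using regular by unfold_locales (simp add: regular_category_def)

context in_regular_category
begin

lemma pullback_exists:
  assumes "b \<in> Ar C" "c \<in> Ar C" "Cod C b = Cod C c"
  obtains a s where "is_pullback C a s b c"
  using assms regular unfolding regular_category_def has_finite_limits_def has_pullbacks_def
  by blast

lemma regular_epi_pullback: "regular_epi C e \<Longrightarrow> is_pullback C a s e f \<Longrightarrow> regular_epi C s"
  using regular unfolding regular_category_def by blast

lemma kernel_pair_coequalizer:
  assumes "is_pullback C k1 k2 f f"
  obtains q where "is_coequalizer C k1 k2 q"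
  using assms regular unfolding regular_category_def by blast

lemma regular_epi_cover_pair:
  assumes q: "regular_epi C q" and u: "u \<in> Ar C" "Cod C u = Cod C q"
    and v: "v \<in> Ar C" "Dom C v = Dom C u" "Cod C v = Cod C q"
  obtains y1 y2 x1 x2 where "regular_epi C y1" "regular_epi C y2"
    "Cod C y1 = Dom C u" "Cod C y2 = Dom C y1"
    "x1 \<in> Ar C" "Dom C x1 = Dom C y2" "Cod C x1 = Dom C q"
    "x2 \<in> Ar C" "Dom C x2 = Dom C y2" "Cod C x2 = Dom C q"
    "q \<cdot> x1 = u \<cdot> (y1 \<cdot> y2)" "q \<cdot> x2 = v \<cdot> (y1 \<cdot> y2)"
proof -
  have Q: "q \<in> Ar C" using regular_epi_arr[OF q] .
  obtain x y1 where pb1: "is_pullback C x y1 q u" using pullback_exists[OF Q u(1)] u(2) by metis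
  note P1 = pullbackD[OF pb1]
  have vy1: "v \<cdot> y1 \<in> Ar C" "Dom C (v \<cdot> y1) = Dom C y1" "Cod C (v \<cdot> y1) = Cod C q"
    using P1 v u by (simp_all add: comp_typing)
  obtain x2 y2 where pb2: "is_pullback C x2 y2 q (v \<cdot> y1)"
    using pullback_exists[OF Q vy1(1)] vy1(3) by metis
  note P2 = pullbackD[OF pb2]
  have ty: "Cod C y1 = Dom C u" "Cod C y2 = Dom C y1" "Dom C x = Dom C y1" "Cod C x = Dom C q"
    "Dom C x2 = Dom C y2" "Cod C x2 = Dom C q"
    using P1(5-7) P2(5-7) vy1(2) v(2) by simp_all
  note ar = Q u(1) v(1) P1(1,2) P2(1,2)
  have "q \<cdot> (x \<cdot> y2) = (q \<cdot> x) \<cdot> y2" using ar ty by (simp add: comp_assoc)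
  also have "\<dots> = u \<cdot> (y1 \<cdot> y2)" using ar ty by (simp add: P1(9) comp_assoc)
  finally have "q \<cdot> (x \<cdot> y2) = u \<cdot> (y1 \<cdot> y2)" .
  moreover have "q \<cdot> x2 = v \<cdot> (y1 \<cdot> y2)" using ar ty v(2) by (simp add: P2(9) comp_assoc)
  ultimately show ?thesis
    using that[of y1 y2 "x \<cdot> y2" x2] regular_epi_pullback[OF q pb1] regular_epi_pullback[OF q pb2]
      ar ty by (simp add: comp_typing)
qed

lemma kernel_pair_coequalizer_factor_mono:
  assumes K: "is_pullback C k1 k2 f f" and co: "is_coequalizer C k1 k2 q"
    and m: "m \<in> Ar C" "Dom C m = Cod C q" "m \<cdot> q = f"
  shows "mono C m"
  unfolding mono_def
proof (intro conjI allI impI)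
  show "m \<in> Ar C" by (rule m(1))
  fix u v
  assume "u \<in> Ar C \<and> v \<in> Ar C \<and> Dom C u = Dom C v \<and> Cod C u = Dom C m \<and>
    Cod C v = Dom C m \<and> m \<cdot> u = m \<cdot> v"
  then have uv: "u \<in> Ar C" "v \<in> Ar C" "Dom C v = Dom C u" "Cod C u = Cod C q" "Cod C v = Cod C q"
    and eq: "m \<cdot> u = m \<cdot> v"
    using m by auto
  note KP = pullbackD[OF K] and Q = coequalizerD[OF co]
  have rq: "regular_epi C q" using co unfolding regular_epi_def by blast
  obtain y1 y2 x1 x2 where Y: "regular_epi C y1" "regular_epi C y2"
    "Cod C y1 = Dom C u" "Cod C y2 = Dom C y1"
    "x1 \<in> Ar C" "Dom C x1 = Dom C y2" "Cod C x1 = Dom C q"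
    "x2 \<in> Ar C" "Dom C x2 = Dom C y2" "Cod C x2 = Dom C q"
    and x1: "q \<cdot> x1 = u \<cdot> (y1 \<cdot> y2)" and x2: "q \<cdot> x2 = v \<cdot> (y1 \<cdot> y2)"
    by (rule regular_epi_cover_pair[OF rq uv(1,4) uv(2,3,5)])
  note ty = Y(3-10) regular_epi_arr[OF Y(1)] regular_epi_arr[OF Y(2)] uv m(1,2) Q(1-6) KP(1-8)
  have "f \<cdot> x1 = m \<cdot> (u \<cdot> (y1 \<cdot> y2))" using ty by (simp flip: m(3) x1 add: comp_assoc comp_typing)
  also have "\<dots> = m \<cdot> (v \<cdot> (y1 \<cdot> y2))" using ty by (simp add: eq comp_assoc comp_typing)
  also have "\<dots> = f \<cdot> x2" using ty by (simp flip: m(3) x2 add: comp_assoc comp_typing)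
  finally obtain z where z: "z \<in> Ar C" "Dom C z = Dom C x2" "Cod C z = Dom C k1"
      "k1 \<cdot> z = x1" "k2 \<cdot> z = x2"
    using pullback_factor[OF K] ty by metis
  have "u \<cdot> (y1 \<cdot> y2) = q \<cdot> (k1 \<cdot> z)" using x1 z(4) by simp
  also have "\<dots> = q \<cdot> (k2 \<cdot> z)" using ty z(1-3) by (simp add: Q(7) comp_assoc)
  also have "\<dots> = v \<cdot> (y1 \<cdot> y2)" using x2 z(5) by simp
  finally have "(u \<cdot> y1) \<cdot> y2 = (v \<cdot> y1) \<cdot> y2" using ty by (simp add: comp_assoc)
  then have "u \<cdot> y1 = v \<cdot> y1"
    by (rule regular_epi_cancel[OF Y(2)]) (use ty in \<open>simp_all add: comp_typing\<close>)
  then show "u = v"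
    by (rule regular_epi_cancel[OF Y(1)]) (use ty in simp_all)
qed

lemma image_factorization_exists:
  assumes f: "f \<in> Ar C"
  obtains e m where "is_image_factorization C f e m"
proof -
  obtain k1 k2 where K: "is_pullback C k1 k2 f f" using pullback_exists[OF f f] by blast
  obtain q where co: "is_coequalizer C k1 k2 q" using kernel_pair_coequalizer[OF K] by blast
  note KP = pullbackD[OF K] and Q = coequalizerD[OF co]
  obtain m where m: "m \<in> Ar C" "Dom C m = Cod C q" "Cod C m = Cod C f" "m \<cdot> q = f"
    using coequalizer_factor[OF co f] KP Q by metis
  have "mono C m" by (rule kernel_pair_coequalizer_factor_mono[OF K co m(1,2,4)])
  moreover have "regular_epi C q" using co unfolding regular_epi_def by blast
  ultimately show ?thesis
    using that[of q m] m Q KP unfolding is_image_factorization_def by auto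
qed

lemma image_factorization_family:
  assumes "\<forall>j \<in> J. f j \<in> Ar C"
  obtains e m where "\<forall>j \<in> J. is_image_factorization C (f j) (e j) (m j)"
proof -
  have "\<forall>j \<in> J. \<exists>e m. is_image_factorization C (f j) e m"
    using assms image_factorization_exists by metis
  then obtain e where "\<forall>j \<in> J. \<exists>m. is_image_factorization C (f j) (e j) m"
    by (auto dest!: bchoice)
  then obtain m where "\<forall>j \<in> J. is_image_factorization C (f j) (e j) (m j)"
    by (auto dest!: bchoice)
  then show ?thesis by (rule that)
qed

end

text \<open>The square of (ii) for the subobject \<open>s\<close>: \<open>T = \<Prod>\<^sub>j S\<^sub>I\<^sub>j\<close> with projections \<open>t\<close>,
  \<open>R = \<Prod>\<^sub>j \<Prod>\<^sub>k\<^sub>\<in>\<^sub>I\<^sub>j A\<^sub>k\<close> with projections \<open>r\<close>, top arrow \<open>a = (e\<^sub>I\<^sub>j)\<^sub>j\<close>, right arrow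
  \<open>b = \<Prod>\<^sub>j s\<^sub>I\<^sub>j\<close> and bottom arrow \<open>c = (\<pi>\<^sub>I\<^sub>j)\<^sub>j\<close>.\<close>

definition image_product_square ::
  "('o, 'm) cat \<Rightarrow> 'j set \<Rightarrow> 'o \<Rightarrow> ('j \<Rightarrow> 'm) \<Rightarrow> 'o \<Rightarrow> ('j \<Rightarrow> 'm) \<Rightarrow>
   'm \<Rightarrow> ('j \<Rightarrow> 'm) \<Rightarrow> ('j \<Rightarrow> 'm) \<Rightarrow> 'o \<Rightarrow> ('j \<Rightarrow> 'm) \<Rightarrow> 'm \<Rightarrow> 'm \<Rightarrow> 'm \<Rightarrow> bool" where
  "image_product_square C J P piI R r s e m T t a b c \<longleftrightarrow>
     mono C s \<and> Cod C s = P \<and>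
     (\<forall>j \<in> J. is_image_factorization C (Comp C (piI j) s) (e j) (m j)) \<and>
     is_product C J (\<lambda>j. Dom C (m j)) T t \<and>
     a \<in> hom C (Dom C s) T \<and> (\<forall>j \<in> J. Comp C (t j) a = e j) \<and>
     b \<in> hom C T R \<and> (\<forall>j \<in> J. Comp C (r j) b = Comp C (m j) (t j)) \<and>
     c \<in> hom C P R \<and> (\<forall>j \<in> J. Comp C (r j) c = piI j)"

context in_category
begin

lemma image_product_squareD:
  assumes "image_product_square C J P piI R r s e m T t a b c"
  shows "mono C s" "s \<in> Ar C" "Cod C s = P" "is_product C J (\<lambda>j. Dom C (m j)) T t"
    "a \<in> Ar C" "Dom C a = Dom C s" "Cod C a = T" "b \<in> Ar C" "Dom C b = T" "Cod C b = R"
    "c \<in> Ar C" "Dom C c = P" "Cod C c = R"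
  using assms mono_arr unfolding image_product_square_def hom_def by auto

lemma image_product_square_component:
  assumes sq: "image_product_square C J P piI R r s e m T t a b c"
    and R: "is_product C J Q R r" and j: "j \<in> J"
  shows "is_image_factorization C (piI j \<cdot> s) (e j) (m j)"
    and "t j \<in> Ar C" "Dom C (t j) = T" "Cod C (t j) = Dom C (m j)"
    and "r j \<in> Ar C" "Dom C (r j) = R" "Cod C (r j) = Q j"
    and "piI j \<in> Ar C" "Dom C (piI j) = P" "Cod C (piI j) = Q j"
    and "mono C (m j)" "Cod C (m j) = Q j"
    and "t j \<cdot> a = e j" "r j \<cdot> b = m j \<cdot> t j" "r j \<cdot> c = piI j"
proof -
  note D = image_product_squareD[OF sq]
  show fact: "is_image_factorization C (piI j \<cdot> s) (e j) (m j)"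
    and eqs: "t j \<cdot> a = e j" "r j \<cdot> b = m j \<cdot> t j" "r j \<cdot> c = piI j"
    using sq j unfolding image_product_square_def by auto
  show "t j \<in> Ar C" "Dom C (t j) = T" "Cod C (t j) = Dom C (m j)"
    using product_proj[OF D(4) j] by simp_all
  show RJ: "r j \<in> Ar C" "Dom C (r j) = R" "Cod C (r j) = Q j"
    using product_proj[OF R j] by simp_all
  show PJ: "piI j \<in> Ar C" "Dom C (piI j) = P" "Cod C (piI j) = Q j"
    using RJ D(11-13) by (simp_all flip: eqs(3) add: comp_typing)
  show "mono C (m j)" "Cod C (m j) = Q j"
    using image_factorizationD[OF fact] PJ D(2,3) by (simp_all add: comp_typing)
qed

lemma image_product_square_commutes:
  assumes sq: "image_product_square C J P piI R r s e m T t a b c"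
    and R: "is_product C J Q R r"
  shows "b \<cdot> a = c \<cdot> s"
proof (rule product_arr_eqI[OF R])
  note D = image_product_squareD[OF sq]
  show "\<forall>j \<in> J. r j \<cdot> (b \<cdot> a) = r j \<cdot> (c \<cdot> s)"
  proof
    fix j assume j: "j \<in> J"
    note K = image_product_square_component[OF sq R j]
    note F = image_factorizationD[OF K(1)]
    note ty = D(2,3,5-13) K(2-10) F(3-7)
    have "r j \<cdot> (b \<cdot> a) = m j \<cdot> (t j \<cdot> a)" using ty by (simp add: K(14) comp_assoc)
    also have "\<dots> = piI j \<cdot> s" using K(13) F(8) by simp
    also have "\<dots> = r j \<cdot> (c \<cdot> s)" using ty by (simp flip: K(15) add: comp_assoc)
    finally show "r j \<cdot> (b \<cdot> a) = r j \<cdot> (c \<cdot> s)" .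
  qed
qed (use image_product_squareD[OF sq] in \<open>simp_all add: comp_typing\<close>)

lemma image_product_square_mono:
  assumes sq: "image_product_square C J P piI R r s e m T t a b c"
    and R: "is_product C J Q R r"
  shows "mono C b"
  by (rule product_map_mono[OF image_product_squareD(4)[OF sq] R, where m = m])
    (use sq image_product_square_component[OF sq R] in \<open>simp_all add: image_product_square_def\<close>)

lemma image_product_square_image_le:
  assumes sq: "image_product_square C J P piI R r s e m T t a b c"
    and R: "is_product C J Q R r" and j: "j \<in> J"
    and x: "x \<in> Ar C" "Cod C x = P" and y: "y \<in> Ar C" "Dom C y = Dom C x" "Cod C y = T"
    and xy: "c \<cdot> x = b \<cdot> y"
    and fact: "is_image_factorization C (piI j \<cdot> x) e' m'"
  shows "subobj_le C m' (m j)"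
proof (rule image_le_mono[OF fact])
  note D = image_product_squareD[OF sq] and K = image_product_square_component[OF sq R j]
  note ty = D(8-13) K(2-10) x y mono_arr[OF K(11)]
  have "m j \<cdot> (t j \<cdot> y) = r j \<cdot> (b \<cdot> y)" using ty by (simp add: K(14) comp_assoc)
  also have "\<dots> = piI j \<cdot> x" using ty by (simp flip: xy K(15) add: comp_assoc)
  finally show "m j \<cdot> (t j \<cdot> y) = piI j \<cdot> x" .
qed (use image_product_square_component[OF sq R j] x y in \<open>simp_all add: comp_typing\<close>)

end

context in_regular_category
begin

lemma image_product_square_pullback:
  assumes R: "is_product C J Q R r" and dec: "has_fold_subobject_decompositions C J P piI"
    and sq: "image_product_square C J P piI R r s e m T t a b c"
  shows "is_pullback C a s b c"
proof -
  note D = image_product_squareD[OF sq]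
  have comm: "b \<cdot> a = c \<cdot> s" by (rule image_product_square_commutes[OF sq R])
  obtain a' s' where pb: "is_pullback C a' s' b c" using pullback_exists D(8,11,10,13) by metis
  note P = pullbackD[OF pb]
  obtain u where u: "u \<in> Ar C" "Dom C u = Dom C s" "Cod C u = Dom C s'" "s' \<cdot> u = s"
    using pullback_factor[OF pb, of a s] D comm P(5) by metis
  have "same_subobject C m1 m2"
    if j: "j \<in> J" and f1: "is_image_factorization C (piI j \<cdot> s) e1 m1"
      and f2: "is_image_factorization C (piI j \<cdot> s') e2 m2" for j e1 m1 e2 m2
  proof -
    note K = image_product_square_component[OF sq R j]
    note F1 = image_factorizationD[OF f1] and F2 = image_factorizationD[OF f2]
    have "(piI j \<cdot> s') \<cdot> u = piI j \<cdot> s"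
      using K(8-10) P(2,7) D(12) u(1-3) by (simp flip: u(4) add: comp_assoc)
    then have "subobj_le C m1 m2"
      by (intro image_le_image[OF f1 f2])
        (use K(8-10) P(2,7) D(2,3,12) u in \<open>simp_all add: comp_typing\<close>)
    moreover have "subobj_le C m2 (m j)"
      by (rule image_product_square_image_le[OF sq R j _ _ _ _ _ _ f2])
        (use P(1-8) P(9)[symmetric] D in simp_all)
    moreover have "subobj_le C (m j) m1"
      by (rule image_le_mono[OF K(1) F1(2)]) (use F1 in simp_all)
    ultimately have "subobj_le C m2 m1"
      using subobj_le_trans F1(4) by blast
    then show ?thesis
      unfolding same_subobject_iff using \<open>subobj_le C m1 m2\<close> F1 F2 K(8-10) P(2,7) D(2,3,12)
      by (simp add: comp_typing)
  qed
  moreover have "mono C s'" by (rule pullback_mono[OF pb image_product_square_mono[OF sq R]])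
  ultimately have "same_subobject C s s'"
    by (intro dec[unfolded has_fold_subobject_decompositions_def, rule_format])
      (use D(1,3,12) P(7) in auto)
  then show ?thesis
    unfolding same_subobject_iff
    using pullback_of_subobj_le[OF pb image_product_square_mono[OF sq R] D(1)] D comm P
    by (simp add: hom_def)
qed

lemma subobj_le_of_image_product_pullback:
  assumes R: "is_product C J Q R r"
    and sq': "image_product_square C J P piI R r s' e' m' T' t' a' b' c"
    and pb: "is_pullback C a' s' b' c"
    and s: "s \<in> Ar C" "Cod C s = P"
    and img: "\<forall>j \<in> J. is_image_factorization C (piI j \<cdot> s) (e j) (m j)"
    and le: "\<forall>j \<in> J. subobj_le C (m j) (m' j)"
  shows "subobj_le C s s'"
proof -
  note D = image_product_squareD[OF sq']
  have "\<forall>j \<in> J. \<exists>d. d \<in> hom C (Dom C (m j)) (Dom C (m' j)) \<and> m' j \<cdot> d = m j"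
    using le unfolding subobj_le_def by blast
  then obtain \<phi> where \<phi>: "\<forall>j \<in> J. \<phi> j \<in> hom C (Dom C (m j)) (Dom C (m' j)) \<and> m' j \<cdot> \<phi> j = m j"
    by (auto dest!: bchoice)
  have \<phi>e: "\<phi> j \<in> Ar C" "Dom C (\<phi> j) = Dom C (m j)" "Cod C (\<phi> j) = Dom C (m' j)"
      "e j \<in> Ar C" "Dom C (e j) = Dom C s" "Cod C (e j) = Dom C (m j)"
      "m' j \<cdot> \<phi> j = m j" "m j \<cdot> e j = piI j \<cdot> s"
    if j: "j \<in> J" for j
  proof -
    note K = image_product_square_component[OF sq' R j]
    have "is_image_factorization C (piI j \<cdot> s) (e j) (m j)" using img j by blast
    note F = image_factorizationD[OF this]
    show "\<phi> j \<in> Ar C" "Dom C (\<phi> j) = Dom C (m j)" "Cod C (\<phi> j) = Dom C (m' j)"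
      "m' j \<cdot> \<phi> j = m j"
      using \<phi> j by (auto simp: hom_def)
    show "e j \<in> Ar C" "Dom C (e j) = Dom C s" "Cod C (e j) = Dom C (m j)" "m j \<cdot> e j = piI j \<cdot> s"
      using F K(8,9) s by (simp_all add: comp_typing)
  qed
  have "\<forall>j \<in> J. \<phi> j \<cdot> e j \<in> hom C (Dom C s) (Dom C (m' j))"
    using \<phi>e by (simp add: hom_def comp_typing)
  then obtain \<psi> where \<psi>: "\<psi> \<in> Ar C" "Dom C \<psi> = Dom C s" "Cod C \<psi> = T'"
      "\<forall>j \<in> J. t' j \<cdot> \<psi> = \<phi> j \<cdot> e j"
    by (rule product_tuple[OF D(4) dom_ob[OF s(1)]])
  have "b' \<cdot> \<psi> = c \<cdot> s"
  proof (rule product_arr_eqI[OF R])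
    show "\<forall>j \<in> J. r j \<cdot> (b' \<cdot> \<psi>) = r j \<cdot> (c \<cdot> s)"
    proof
      fix j assume j: "j \<in> J"
      note K = image_product_square_component[OF sq' R j]
      note ty = D(8-13) K(2-10) \<psi>(1-3) \<phi>e(1-6)[OF j] s mono_arr[OF K(11)]
      have "r j \<cdot> (b' \<cdot> \<psi>) = m' j \<cdot> (t' j \<cdot> \<psi>)" using ty by (simp add: K(14) comp_assoc)
      also have "\<dots> = (m' j \<cdot> \<phi> j) \<cdot> e j" using ty \<psi>(4) j by (simp add: comp_assoc)
      also have "\<dots> = piI j \<cdot> s" using \<phi>e(7,8)[OF j] by simp
      also have "\<dots> = r j \<cdot> (c \<cdot> s)" using ty by (simp flip: K(15) add: comp_assoc)
      finally show "r j \<cdot> (b' \<cdot> \<psi>) = r j \<cdot> (c \<cdot> s)" .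
    qed
  qed (use \<psi> D s in \<open>simp_all add: comp_typing\<close>)
  then obtain u where "u \<in> Ar C" "Dom C u = Dom C s" "Cod C u = Dom C s'" "s' \<cdot> u = s"
    using pullback_factor[OF pb, of \<psi> s] pullbackD[OF pb] \<psi> D s by metis
  then show ?thesis unfolding subobj_le_def hom_def by blast
qed

lemma image_product_square_exists:
  assumes R: "is_product C J Q R r"
    and c: "c \<in> hom C P R" "\<forall>j \<in> J. r j \<cdot> c = piI j"
    and s: "mono C s" "Cod C s = P"
    and prods: "\<forall>e m. (\<forall>j \<in> J. is_image_factorization C (piI j \<cdot> s) (e j) (m j)) \<longrightarrow>
      (\<exists>T t. is_product C J (\<lambda>j. Dom C (m j)) T t)"
  obtains e m T t a b where "image_product_square C J P piI R r s e m T t a b c"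
proof -
  have S: "s \<in> Ar C" using mono_arr[OF s(1)] .
  have PJ: "piI j \<in> Ar C" "Dom C (piI j) = P" "Cod C (piI j) = Q j" if j: "j \<in> J" for j
  proof -
    have "r j \<cdot> c = piI j" using c(2) j by blast
    then show "piI j \<in> Ar C" "Dom C (piI j) = P" "Cod C (piI j) = Q j"
      using product_proj[OF R j] c(1) unfolding hom_def
      by (auto simp flip: \<open>r j \<cdot> c = piI j\<close> simp add: comp_typing)
  qed
  obtain e m where fact: "\<forall>j \<in> J. is_image_factorization C (piI j \<cdot> s) (e j) (m j)"
    using image_factorization_family[of J "\<lambda>j. piI j \<cdot> s"] PJ S s(2) by (metis comp_arr)
  obtain T t where T: "is_product C J (\<lambda>j. Dom C (m j)) T t" using prods fact by blast
  have em: "e j \<in> Ar C" "Dom C (e j) = Dom C s" "Cod C (e j) = Dom C (m j)"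
      "m j \<in> Ar C" "Cod C (m j) = Q j"
    if j: "j \<in> J" for j
    using image_factorizationD[OF fact[rule_format, OF j]] PJ[OF j] S s(2)
    by (simp_all add: comp_typing)
  have "\<forall>j \<in> J. e j \<in> hom C (Dom C s) (Dom C (m j))"
    using em by (simp add: hom_def)
  then obtain a where a: "a \<in> Ar C" "Dom C a = Dom C s" "Cod C a = T" "\<forall>j \<in> J. t j \<cdot> a = e j"
    by (rule product_tuple[OF T dom_ob[OF S]])
  have "\<forall>j \<in> J. m j \<cdot> t j \<in> hom C T (Q j)"
    using em product_proj[OF T] by (simp add: hom_def comp_typing)
  then obtain b where b: "b \<in> Ar C" "Dom C b = T" "Cod C b = R" "\<forall>j \<in> J. r j \<cdot> b = m j \<cdot> t j"
    by (rule product_tuple[OF R product_ob[OF T]])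
  show ?thesis
    by (rule that[of e m T t a b])
      (use s fact T a b c in \<open>simp add: image_product_square_def hom_def\<close>)
qed

lemma subobj_le_of_images_le:
  assumes R: "is_product C J Q R r"
    and c: "c \<in> hom C P R" "\<forall>j \<in> J. r j \<cdot> c = piI j"
    and pullbacks: "\<forall>s e m T t a b. image_product_square C J P piI R r s e m T t a b c \<longrightarrow>
      is_pullback C a s b c"
    and prods: "\<forall>e m. (\<forall>j \<in> J. is_image_factorization C (piI j \<cdot> s') (e j) (m j)) \<longrightarrow>
      (\<exists>T t. is_product C J (\<lambda>j. Dom C (m j)) T t)"
    and s: "mono C s" "Cod C s = P" and s': "mono C s'" "Cod C s' = P"
    and images_le: "\<forall>j \<in> J. \<forall>e m e' m'. is_image_factorization C (piI j \<cdot> s) e m \<and>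
      is_image_factorization C (piI j \<cdot> s') e' m' \<longrightarrow> subobj_le C m m'"
  shows "subobj_le C s s'"
proof -
  obtain e' m' T' t' a' b' where sq': "image_product_square C J P piI R r s' e' m' T' t' a' b' c"
    by (rule image_product_square_exists[OF R c s' prods])
  have S: "s \<in> Ar C" using mono_arr[OF s(1)] .
  have "\<forall>j \<in> J. piI j \<cdot> s \<in> Ar C"
    using image_product_square_component[OF sq' R] S s(2) by (simp add: comp_typing)
  then obtain e m where img: "\<forall>j \<in> J. is_image_factorization C (piI j \<cdot> s) (e j) (m j)"
    by (rule image_factorization_family)
  have "\<forall>j \<in> J. subobj_le C (m j) (m' j)"
    using images_le img sq' unfolding image_product_square_def by blast
  then show ?thesis
    using subobj_le_of_image_product_pullback[OF R sq' _ S s(2) img] pullbacks sq' by blast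
qed

lemma fold_subobject_decompositions_if_pullbacks:
  assumes R: "is_product C J Q R r"
    and c: "c \<in> hom C P R" "\<forall>j \<in> J. r j \<cdot> c = piI j"
    and pullbacks: "\<forall>s e m T t a b. image_product_square C J P piI R r s e m T t a b c \<longrightarrow>
      is_pullback C a s b c"
    and prods: "\<forall>s e m. mono C s \<and> Cod C s = P \<and>
      (\<forall>j \<in> J. is_image_factorization C (piI j \<cdot> s) (e j) (m j)) \<longrightarrow>
      (\<exists>T t. is_product C J (\<lambda>j. Dom C (m j)) T t)"
  shows "has_fold_subobject_decompositions C J P piI"
proof -
  have le: "subobj_le C s s'"
    if "mono C s" "Cod C s = P" "mono C s'" "Cod C s' = P"
      "\<forall>j \<in> J. \<forall>e m e' m'. is_image_factorization C (piI j \<cdot> s) e m \<and>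
        is_image_factorization C (piI j \<cdot> s') e' m' \<longrightarrow> subobj_le C m m'" for s s'
    by (rule subobj_le_of_images_le[OF R c pullbacks]) (use prods that in blast)+
  have "same_subobject C s s'"
    if "mono C s" "Cod C s = P" "mono C s'" "Cod C s' = P"
      "\<forall>j \<in> J. \<forall>e m e' m'. is_image_factorization C (piI j \<cdot> s) e m \<and>
        is_image_factorization C (piI j \<cdot> s') e' m' \<longrightarrow> same_subobject C m m'" for s s'
  proof -
    have "subobj_le C s s'" and "subobj_le C s' s"
      by (rule le; use that in \<open>auto simp: same_subobject_iff\<close>)+
    then show ?thesis using that by (simp add: same_subobject_iff)
  qed
  then show ?thesis unfolding has_fold_subobject_decompositions_def by blast
qed

end

theorem proposition4p3:
  fixes C :: "('o, 'm) cat"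
    and I :: "'i set" and J :: "'j set" and Ij :: "'j \<Rightarrow> 'i set"
    and A :: "'i \<Rightarrow> 'o"
    and P :: 'o and p :: "'i \<Rightarrow> 'm"
    and Q :: "'j \<Rightarrow> 'o" and q :: "'j \<Rightarrow> 'i \<Rightarrow> 'm"
    and R :: 'o and r :: "'j \<Rightarrow> 'm"
    and piI :: "'j \<Rightarrow> 'm"
  assumes reg: "regular_category C"
    and sub: "\<forall>j \<in> J. Ij j \<subseteq> I"
    and objs: "\<forall>i \<in> I. A i \<in> Ob C"
    and prodP: "is_product C I A P p"
    and prodQ: "\<forall>j \<in> J. is_product C (Ij j) A (Q j) (q j)"
    and prodR: "is_product C J Q R r"
    and piI: "\<forall>j \<in> J. piI j \<in> hom C P (Q j) \<and> (\<forall>k \<in> Ij j. Comp C (q j k) (piI j) = p k)"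
    and prods_exist: "\<forall>s e m. mono C s \<and> Cod C s = P \<and>
            (\<forall>j \<in> J. is_image_factorization C (Comp C (piI j) s) (e j) (m j)) \<longrightarrow>
            (\<exists>T t. is_product C J (\<lambda>j. Dom C (m j)) T t)"
  shows "has_fold_subobject_decompositions C J P piI \<longleftrightarrow>
    (\<forall>s e m T t a b c.
       mono C s \<and> Cod C s = P \<and>
       (\<forall>j \<in> J. is_image_factorization C (Comp C (piI j) s) (e j) (m j)) \<and>
       is_product C J (\<lambda>j. Dom C (m j)) T t \<and>
       a \<in> hom C (Dom C s) T \<and> (\<forall>j \<in> J. Comp C (t j) a = e j) \<and>
       b \<in> hom C T R \<and> (\<forall>j \<in> J. Comp C (r j) b = Comp C (m j) (t j)) \<and>
       c \<in> hom C P R \<and> (\<forall>j \<in> J. Comp C (r j) c = piI j)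
       \<longrightarrow> is_pullback C a s b c)"
proof -
  \<comment> \<open>Of the data describing \<open>\<Prod>\<^sub>i A\<^sub>i\<close>, \<open>\<Prod>\<^sub>k\<^sub>\<in>\<^sub>I\<^sub>j A\<^sub>k\<close> and \<open>\<pi>\<^sub>I\<^sub>j\<close> only \<open>piI j \<in> hom C P (Q j)\<close> and \<open>P \<in> Ob C\<close>
    are used: the equivalence holds for any family of arrows out of \<open>P\<close>.\<close>
  interpret in_regular_category C by (rule in_regular_category.intro[OF reg])
  have "\<forall>j \<in> J. piI j \<in> hom C P (Q j)" using piI by blast
  then obtain c where c: "c \<in> Ar C" "Dom C c = P" "Cod C c = R" "\<forall>j \<in> J. r j \<cdot> c = piI j"
    by (rule product_tuple[OF prodR product_ob[OF prodP]])
  have c_hom: "c \<in> hom C P R" using c by (simp add: hom_def)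
  show ?thesis
    unfolding image_product_square_def[symmetric]
  proof
    assume "has_fold_subobject_decompositions C J P piI"
    then show "\<forall>s e m T t a b c. image_product_square C J P piI R r s e m T t a b c \<longrightarrow>
        is_pullback C a s b c"
      using image_product_square_pullback[OF prodR] by blast
  next
    assume pullbacks: "\<forall>s e m T t a b c. image_product_square C J P piI R r s e m T t a b c \<longrightarrow>
        is_pullback C a s b c"
    show "has_fold_subobject_decompositions C J P piI"
      by (rule fold_subobject_decompositions_if_pullbacks[OF prodR c_hom c(4)])
        (use pullbacks prods_exist in blast)+
  qed
qed

end
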